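(* Let $p$ be an odd prime, let $v$ be an integer with $1<v<p-1$, let $g\in\{2,\dots,p-1\}$ be a primitive root modulo $p$ with $\gcd(g,v)=1$, let $t\ge1$ and $b\in\{0,\dots,v-1\}$. Let $$\rho(b,t)=\#\{i\in[1,p-1]:\ g^i\,\%\,p\not\equiv b,\ g^{i+t+1}\,\%\,p\not\equiv b,\ g^{i+j}\,\%\,p\equiv b\ (1\le j\le t)\},$$ all congruences modulo $v$. Write $p=q\,g^{t+1}+r$ with $0\le r<g^{t+1}$. Then $$\left\lfloor\frac{g}{v}\right\rfloor^{t-1}\left\lfloor\frac{(v-1)g}{v}\right\rfloor^2\left\lfloor\frac{q}{v}\right\rfloor\ \le\ \rho(b,t)\ \le\ \left\lceil\frac{g}{v}\right\rceil^{t-1}\left\lceil\frac{(v-1)g}{v}\right\rceil^2\left\lceil\frac{q+1}{v}\right\rceil.$$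
   Context: $x\,\%\,p$ denotes the least nonnegative remainder of the integer $x$ modulo $p$. *)

theory Defs
  imports "HOL-Number_Theory.Number_Theory"
begin

definition rho :: "nat \<Rightarrow> nat \<Rightarrow> nat \<Rightarrow> nat \<Rightarrow> nat \<Rightarrow> nat" where
  "rho p g v b t = card {i \<in> {1..p-1}.
      \<not> [g ^ i mod p = b] (mod v) \<and>
      \<not> [g ^ (i + t + 1) mod p = b] (mod v) \<and>
      (\<forall>j \<in> {1..t}. [g ^ (i + j) mod p = b] (mod v))}"

end

(* Write x = g^i mod p for the start of a run and y_j = g^j x mod p for its orbit.  Then
   g y_j = p k_j + y_(j+1) with carries k_j < g, and k_0, ..., k_t are the base-g digits, most
   significant first, of K = floor(g^(t+1) x / p).  If y_j is congruent to b mod v, then so is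
   y_(j+1) iff p k_j + b and g b are congruent mod v; as g is a unit mod v, the same test on k_0
   decides whether y_0 is in the class of b once y_1 is.  Hence x starts a run of length exactly t
   iff the test succeeds for the inner digits k_1, ..., k_(t-1), fails for k_0 and k_t, and g x is
   congruent to p k_0 + b.  As p is a unit mod v, the digits passing the test form one residue class
   mod v in [0, g), which has between floor(g/v) and ceil(g/v) elements.  For each admissible K the
   x form an interval of length q or q + 1, and the last congruence cuts it down to a residue class
   mod v, leaving between floor(q/v) and ceil((q+1)/v) points. *)

theory Submission
  imports Defs
begin

lemma less_div_mult_add:
  fixes m v :: nat
  assumes "0 < v"
  shows "m < m div v * v + v"
  using div_mult_mod_eq[of m v] mod_less_divisor[OF assms, of m] by linarith

lemma ceiling_divide_of_nat_eq:
  "\<lceil>real m / real n\<rceil> = int ((m + n - 1) div n)"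
proof (cases "n = 0")
  case False
  define c where "c = (m + n - 1) div n"
  have "c * n \<le> m + n - 1" "m + n - 1 < c * n + n"
    using False less_div_mult_add[of n "m + n - 1"] unfolding c_def
    by simp_all
  then have "c * n < m + n" "m \<le> c * n"
    using False by linarith+
  then have "real c * real n < real m + real n" "real m \<le> real c * real n"
    by (simp_all only: of_nat_add [symmetric] of_nat_mult [symmetric] of_nat_less_iff of_nat_le_iff)
  then have "real c - 1 < real m / real n" "real m / real n \<le> real c"
    using False by (auto simp: field_simps)
  then show ?thesis unfolding c_def by (intro ceiling_unique) auto
qed simp

lemma div_add_le_div_add_ceiling:
  fixes m n v :: nat
  assumes "0 < v"
  shows "(m + n) div v \<le> m div v + (n + v - 1) div v"
proof -
  have "m + n < (m div v + (n + v - 1) div v + 1) * v"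
    using less_div_mult_add[OF assms, of m] less_div_mult_add[OF assms, of "n + v - 1"]
    by (simp add: algebra_simps)
  then have "(m + n) div v < m div v + (n + v - 1) div v + 1"
    by (rule less_mult_imp_div_less)
  then show ?thesis
    by simp
qed

lemma ceiling_div_le_iff:
  fixes n N x :: nat
  assumes "0 < N"
  shows "(n + N - 1) div N \<le> x \<longleftrightarrow> n \<le> x * N"
proof -
  have "(n + N - 1) div N \<le> x \<longleftrightarrow> n + N - 1 < Suc x * N"
    using assms by (simp add: less_Suc_eq_le[symmetric] div_less_iff_less_mult)
  also have "\<dots> \<longleftrightarrow> n \<le> x * N"
    using assms by (cases N) auto
  finally show ?thesis .
qed

lemma card_residue_class_atLeastLessThan:
  fixes lo hi v a :: nat
  assumes "a < v"
  shows "\<lfloor>real (hi - lo) / real v\<rfloor> \<le> int (card {x \<in> {lo..<hi}. x mod v = a})"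
    and "int (card {x \<in> {lo..<hi}. x mod v = a}) \<le> \<lceil>real (hi - lo) / real v\<rceil>"
proof -
  let ?S = "{x \<in> {lo..<hi}. x mod v = a}"
  define c where "c n = (n + (v - 1 - a)) div v" for n
  have v: "0 < v"
    using assms by simp
  have below_iff: "m * v + a < n \<longleftrightarrow> m < c n" for m n
  proof -
    have "m < c n \<longleftrightarrow> Suc m * v \<le> n + (v - 1 - a)"
      unfolding c_def using v by (simp add: Suc_le_eq[symmetric] less_eq_div_iff_mult_less_eq)
    then show ?thesis
      using assms by auto
  qed
  have S: "?S = (\<lambda>m. m * v + a) ` {c lo..<c hi}"
  proof (intro equalityI subsetI)
    fix x
    assume "x \<in> ?S"
    then have "x = x div v * v + a" "lo \<le> x" "x < hi"
      using div_mult_mod_eq[of x v] by auto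
    then show "x \<in> (\<lambda>m. m * v + a) ` {c lo..<c hi}"
      using below_iff[of "x div v"] by (intro image_eqI[of _ _ "x div v"]) (auto simp: not_less[symmetric])
  next
    fix x
    assume "x \<in> (\<lambda>m. m * v + a) ` {c lo..<c hi}"
    then show "x \<in> ?S"
      using below_iff assms by (auto simp: not_less[symmetric])
  qed
  have "inj_on (\<lambda>m. m * v + a) {c lo..<c hi}"
    using v by (intro inj_onI) simp
  then have card_S: "card ?S = c hi - c lo"
    unfolding S by (simp add: card_image)
  have "(hi - lo) div v \<le> c hi - c lo \<and> c hi - c lo \<le> (hi - lo + v - 1) div v"
  proof (cases "lo \<le> hi")
    case True
    then have c_hi: "c hi = (lo + (v - 1 - a) + (hi - lo)) div v"
      unfolding c_def by (simp add: algebra_simps)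
    have "c lo + (hi - lo) div v \<le> c hi"
      using c_hi div_add1_eq[of "lo + (v - 1 - a)" "hi - lo" v] unfolding c_def by linarith
    moreover have "c hi \<le> c lo + (hi - lo + v - 1) div v"
      using c_hi div_add_le_div_add_ceiling[OF v, of "lo + (v - 1 - a)" "hi - lo"]
      unfolding c_def by linarith
    ultimately show ?thesis
      by linarith
  next
    case False
    then have "c hi \<le> c lo"
      unfolding c_def by (simp add: div_le_mono)
    then show ?thesis
      using False by simp
  qed
  then show "\<lfloor>real (hi - lo) / real v\<rfloor> \<le> int (card ?S)"
    and "int (card ?S) \<le> \<lceil>real (hi - lo) / real v\<rceil>"
    unfolding card_S floor_divide_of_nat_eq ceiling_divide_of_nat_eq by simp_all
qed

lemma card_nonresidue_class_atLeastLessThan: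
  fixes lo hi v a :: nat
  assumes "a < v"
  shows "\<lfloor>real ((v - 1) * (hi - lo)) / real v\<rfloor> \<le> int (card {x \<in> {lo..<hi}. x mod v \<noteq> a})"
    and "int (card {x \<in> {lo..<hi}. x mod v \<noteq> a}) \<le> \<lceil>real ((v - 1) * (hi - lo)) / real v\<rceil>"
proof -
  let ?S = "{x \<in> {lo..<hi}. x mod v = a}"
  let ?c = "card ?S" and ?y = "real (hi - lo) / real v"
  have "{x \<in> {lo..<hi}. x mod v \<noteq> a} = {lo..<hi} - ?S"
    by blast
  moreover have "card ({lo..<hi} - ?S) = card {lo..<hi} - ?c"
    by (rule card_Diff_subset) auto
  ultimately have card: "card {x \<in> {lo..<hi}. x mod v \<noteq> a} = (hi - lo) - ?c"
    by simp
  have "?c \<le> card {lo..<hi}"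
    by (rule card_mono) auto
  then have card': "real_of_int (int (card {x \<in> {lo..<hi}. x mod v \<noteq> a})) = real (hi - lo) - real ?c"
    unfolding card by simp
  have frac: "real ((v - 1) * (hi - lo)) / real v = real (hi - lo) - ?y"
    using assms by (simp add: field_simps)
  have "real_of_int \<lfloor>?y\<rfloor> \<le> real ?c" "real ?c \<le> real_of_int \<lceil>?y\<rceil>"
    using card_residue_class_atLeastLessThan[OF assms, where lo = lo and hi = hi]
    by (simp_all only: of_int_le_iff[symmetric] of_int_of_nat_eq)
  moreover have "?y < real_of_int \<lfloor>?y\<rfloor> + 1" "real_of_int \<lceil>?y\<rceil> < ?y + 1"
    by linarith+
  ultimately show "\<lfloor>real ((v - 1) * (hi - lo)) / real v\<rfloor> \<le> int (card {x \<in> {lo..<hi}. x mod v \<noteq> a})"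
    and "int (card {x \<in> {lo..<hi}. x mod v \<noteq> a}) \<le> \<lceil>real ((v - 1) * (hi - lo)) / real v\<rceil>"
    unfolding frac floor_le_iff le_ceiling_iff card' by linarith+
qed

lemma cong_linear_solutions_residue_class:
  fixes k d c v :: nat
  assumes "coprime k v" and "0 < v"
  obtains a where "a < v" and "\<And>x. [k * x + d = c] (mod v) \<longleftrightarrow> x mod v = a"
proof -
  define c' where "c' = c + (v - 1) * d"
  have "c' + d = c + v * d"
    using assms(2) unfolding c'_def by (cases v) (simp_all add: algebra_simps)
  then have shift: "[c' + d = c] (mod v)"
    by (simp add: cong_def)
  obtain a where a: "a < v" "[k * a = c'] (mod v)"
    using cong_solve_unique[OF assms(1)] assms(2) by blast
  have "[k * x + d = c] (mod v) \<longleftrightarrow> x mod v = a" for x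
  proof -
    have "[k * x + d = c] (mod v) \<longleftrightarrow> [k * x + d = c' + d] (mod v)"
      using shift by (meson cong_sym cong_trans)
    also have "\<dots> \<longleftrightarrow> [k * x = k * a] (mod v)"
      using a(2) by (simp add: cong_add_rcancel_nat) (meson cong_sym cong_trans)
    also have "\<dots> \<longleftrightarrow> [x = a] (mod v)"
      using assms(1) by (rule cong_mult_lcancel_nat)
    also have "\<dots> \<longleftrightarrow> x mod v = a"
      using a(1) by (simp add: cong_def)
    finally show ?thesis .
  qed
  with a(1) show ?thesis
    by (rule that)
qed

lemma mult_div_fibre_interval:
  fixes N p K :: nat
  assumes "0 < N" and "0 < p"
  obtains lo hi where "{x. (N * x) div p = K} = {lo..<hi}"
    and "p div N \<le> hi - lo" and "hi - lo \<le> p div N + 1"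
proof -
  define lo where "lo = (K * p + N - 1) div N"
  define hi where "hi = (K * p + p + N - 1) div N"
  have "(N * x) div p = K \<longleftrightarrow> K * p \<le> x * N \<and> \<not> K * p + p \<le> x * N" for x
  proof -
    have "(N * x) div p = K \<longleftrightarrow> K \<le> (N * x) div p \<and> \<not> K + 1 \<le> (N * x) div p"
      by linarith
    then show ?thesis
      using assms(2) by (simp add: less_eq_div_iff_mult_less_eq algebra_simps)
  qed
  moreover have "x \<in> {lo..<hi} \<longleftrightarrow> K * p \<le> x * N \<and> \<not> K * p + p \<le> x * N" for x
    unfolding lo_def hi_def atLeastLessThan_iff not_le[symmetric] ceiling_div_le_iff[OF assms(1)] ..
  ultimately have fibre: "{x. (N * x) div p = K} = {lo..<hi}"
    by blast
  have "hi = (K * p + N - 1 + p) div N"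
    unfolding hi_def using assms(1) by (simp add: algebra_simps)
  then have "lo + p div N \<le> hi" and "hi \<le> lo + (p + N - 1) div N"
    unfolding lo_def using div_add1_eq[of "K * p + N - 1" p N]
      div_add_le_div_add_ceiling[OF assms(1), of "K * p + N - 1" p] by linarith+
  moreover have "(p + N - 1) div N \<le> p div N + 1"
    using div_le_mono[of "p + N - 1" "p + N" N] assms(1) by simp
  ultimately have "p div N \<le> hi - lo" and "hi - lo \<le> p div N + 1"
    by linarith+
  with fibre show ?thesis
    by (rule that)
qed

lemma card_digits_restricted:
  fixes g n :: nat and P :: "nat \<Rightarrow> nat \<Rightarrow> bool"
  assumes "0 < g"
  shows "card {K. K < g ^ n \<and> (\<forall>j<n. P j (K div g ^ j mod g))} = (\<Prod>j<n. card {d. d < g \<and> P j d})"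
proof (induction n arbitrary: P)
  case 0
  have "{K. K < g ^ 0 \<and> (\<forall>j<0. P j (K div g ^ j mod g))} = {0}"
    by auto
  then show ?case
    by simp
next
  case (Suc n)
  let ?S = "{K. K < g ^ Suc n \<and> (\<forall>j<Suc n. P j (K div g ^ j mod g))}"
  let ?D = "{d. d < g \<and> P 0 d}"
  let ?T = "{K. K < g ^ n \<and> (\<forall>j<n. P (Suc j) (K div g ^ j mod g))}"
  have less_pow_Suc: "K < g ^ Suc n \<longleftrightarrow> K div g < g ^ n" for K
    using assms by (simp add: div_less_iff_less_mult mult.commute)
  have "bij_betw (\<lambda>K. (K mod g, K div g)) ?S (?D \<times> ?T)"
  proof (rule bij_betw_byWitness[where f' = "\<lambda>(d, K). d + g * K"])
    show "\<forall>K\<in>?S. (\<lambda>(d, K). d + g * K) (K mod g, K div g) = K"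
      by simp
    show "\<forall>x\<in>?D \<times> ?T. ((\<lambda>(d, K). d + g * K) x mod g, (\<lambda>(d, K). d + g * K) x div g) = x"
      by auto
    show "(\<lambda>K. (K mod g, K div g)) ` ?S \<subseteq> ?D \<times> ?T"
      using less_pow_Suc assms by (auto simp: div_mult2_eq All_less_Suc2)
    show "(\<lambda>(d, K). d + g * K) ` (?D \<times> ?T) \<subseteq> ?S"
      using less_pow_Suc assms by (auto simp: div_mult2_eq All_less_Suc2)
  qed
  then have "card ?S = card ?D * card ?T"
    by (simp add: bij_betw_same_card card_cartesian_product)
  also have "\<dots> = (\<Prod>j<Suc n. card {d. d < g \<and> P j d})"
    using Suc.IH[of "\<lambda>j. P (Suc j)"] by (simp add: prod.lessThan_Suc_shift del: prod.lessThan_Suc)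
  finally show ?case .
qed

definition keeps_class :: "nat \<Rightarrow> nat \<Rightarrow> nat \<Rightarrow> nat \<Rightarrow> nat \<Rightarrow> bool" where
  "keeps_class p g v b d \<longleftrightarrow> [p * d + b = g * b] (mod v)"

lemma cong_mult_mod_iff:
  fixes g y p b v :: nat
  shows "[(g * y) mod p = b] (mod v) \<longleftrightarrow> [g * y = p * ((g * y) div p) + b] (mod v)"
proof -
  have "[(g * y) mod p = b] (mod v) \<longleftrightarrow>
      [p * ((g * y) div p) + (g * y) mod p = p * ((g * y) div p) + b] (mod v)"
    by (simp only: cong_add_lcancel_nat)
  then show ?thesis
    by simp
qed

lemma cong_successor_iff_keeps_class:
  fixes g y p b v :: nat
  assumes "[y = b] (mod v)"
  shows "[(g * y) mod p = b] (mod v) \<longleftrightarrow> keeps_class p g v b ((g * y) div p)"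
proof -
  have "[g * y = g * b] (mod v)"
    using assms by (rule cong_scalar_left)
  then show ?thesis
    unfolding cong_mult_mod_iff keeps_class_def by (meson cong_sym cong_trans)
qed

lemma cong_predecessor_iff_keeps_class:
  fixes g y p b v :: nat
  assumes "coprime g v" and "[(g * y) mod p = b] (mod v)"
  shows "[y = b] (mod v) \<longleftrightarrow> keeps_class p g v b ((g * y) div p)"
proof -
  have "[y = b] (mod v) \<longleftrightarrow> [g * y = g * b] (mod v)"
    using assms(1) by (simp add: cong_mult_lcancel_nat)
  moreover have "[g * y = p * ((g * y) div p) + b] (mod v)"
    using assms(2) by (simp add: cong_mult_mod_iff)
  ultimately show ?thesis
    unfolding keeps_class_def by (meson cong_sym cong_trans)
qed

lemma ball_atLeastAtMost_iff_step:
  fixes P R :: "nat \<Rightarrow> bool"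
  assumes "1 \<le> t" and "\<And>m. P m \<Longrightarrow> P (Suc m) \<longleftrightarrow> R m"
  shows "(\<forall>j\<in>{1..t}. P j) \<longleftrightarrow> P 1 \<and> (\<forall>j\<in>{1..<t}. R j)"
  using assms(1)
proof (induction t rule: dec_induct)
  case base
  then show ?case by simp
next
  case (step t)
  have "(\<forall>j\<in>{1..Suc t}. P j) \<longleftrightarrow> (\<forall>j\<in>{1..t}. P j) \<and> P (Suc t)"
    using step.hyps(1) by (auto simp: atLeastAtMostSuc_conv)
  also have "\<dots> \<longleftrightarrow> P 1 \<and> (\<forall>j\<in>{1..<t}. R j) \<and> R t"
    using step.IH assms(2)[of t] step.hyps(1) by auto
  also have "\<dots> \<longleftrightarrow> P 1 \<and> (\<forall>j\<in>{1..<Suc t}. R j)"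
    using step.hyps(1) by (auto simp: atLeastLessThanSuc)
  finally show ?case .
qed

lemma orbit_run_iff_carries:
  fixes y :: "nat \<Rightarrow> nat" and g p v b t :: nat
  assumes "coprime g v" and "1 \<le> t" and orbit: "\<And>m. y (Suc m) = (g * y m) mod p"
  shows "(\<not> [y 0 = b] (mod v) \<and> \<not> [y (Suc t) = b] (mod v) \<and> (\<forall>j\<in>{1..t}. [y j = b] (mod v))) \<longleftrightarrow>
         [g * y 0 = p * ((g * y 0) div p) + b] (mod v) \<and>
         (\<forall>j\<le>t. keeps_class p g v b ((g * y j) div p) \<longleftrightarrow> 0 < j \<and> j < t)"
proof -
  let ?cls = "\<lambda>j. [y j = b] (mod v)" and ?keeps = "\<lambda>j. keeps_class p g v b ((g * y j) div p)"
  have step: "?cls (Suc m) \<longleftrightarrow> ?keeps m" if "?cls m" for m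
    unfolding orbit using that by (rule cong_successor_iff_keeps_class)
  have first: "?cls 1 \<longleftrightarrow> [g * y 0 = p * ((g * y 0) div p) + b] (mod v)"
    unfolding One_nat_def orbit by (rule cong_mult_mod_iff)
  have before_first: "?cls 0 \<longleftrightarrow> ?keeps 0" if "?cls 1"
    using that unfolding One_nat_def orbit by (rule cong_predecessor_iff_keeps_class[OF assms(1)])
  have middle: "(\<forall>j\<in>{1..t}. ?cls j) \<longleftrightarrow> ?cls 1 \<and> (\<forall>j\<in>{1..<t}. ?keeps j)"
    using assms(2) step by (rule ball_atLeastAtMost_iff_step)
  have pattern: "(\<forall>j\<le>t. ?keeps j \<longleftrightarrow> 0 < j \<and> j < t) \<longleftrightarrow>
      \<not> ?keeps 0 \<and> (\<forall>j\<in>{1..<t}. ?keeps j) \<and> \<not> ?keeps t"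
  proof
    assume "\<forall>j\<le>t. ?keeps j \<longleftrightarrow> 0 < j \<and> j < t"
    then show "\<not> ?keeps 0 \<and> (\<forall>j\<in>{1..<t}. ?keeps j) \<and> \<not> ?keeps t"
      by auto
  next
    assume keeps: "\<not> ?keeps 0 \<and> (\<forall>j\<in>{1..<t}. ?keeps j) \<and> \<not> ?keeps t"
    show "\<forall>j\<le>t. ?keeps j \<longleftrightarrow> 0 < j \<and> j < t"
    proof (intro allI impI)
      fix j
      assume "j \<le> t"
      then consider "j = 0" | "j = t" | "j \<in> {1..<t}"
        by fastforce
      then show "?keeps j \<longleftrightarrow> 0 < j \<and> j < t"
        using keeps assms(2) by cases auto
    qed
  qed
  have "t \<in> {1..t}"
    using assms(2) by simp
  then show ?thesis
    unfolding pattern using middle first before_first step[of t] by blast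
qed

definition run_start :: "nat \<Rightarrow> nat \<Rightarrow> nat \<Rightarrow> nat \<Rightarrow> nat \<Rightarrow> nat \<Rightarrow> bool" where
  "run_start p g v b t x \<longleftrightarrow> \<not> [x = b] (mod v) \<and> \<not> [(g ^ (t + 1) * x) mod p = b] (mod v) \<and>
     (\<forall>j\<in>{1..t}. [(g ^ j * x) mod p = b] (mod v))"

(* Digit j of K, counted from the least significant one, is the carry k_(t-j); the condition is
   symmetric under j <-> t - j. *)
definition run_digits :: "nat \<Rightarrow> nat \<Rightarrow> nat \<Rightarrow> nat \<Rightarrow> nat \<Rightarrow> nat set" where
  "run_digits p g v b t = {K. K < g ^ (t + 1) \<and>
     (\<forall>j<t + 1. keeps_class p g v b (K div g ^ j mod g) \<longleftrightarrow> 0 < j \<and> j < t)}"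

definition run_fibre :: "nat \<Rightarrow> nat \<Rightarrow> nat \<Rightarrow> nat \<Rightarrow> nat \<Rightarrow> nat \<Rightarrow> nat set" where
  "run_fibre p g v b t K = {x. (g ^ (t + 1) * x) div p = K \<and> [g * x = p * (K div g ^ t) + b] (mod v)}"

lemma pow_add_mult_div_div_pow:
  fixes g p x j m :: nat
  assumes "0 < g"
  shows "(g ^ (j + m) * x) div p div g ^ j = (g ^ m * x) div p"
proof -
  have "(g ^ (j + m) * x) div p div g ^ j = (g ^ j * (g ^ m * x)) div (g ^ j * p)"
    by (simp add: div_mult2_eq[symmetric] power_add mult.assoc mult.commute)
  also have "\<dots> = (g ^ m * x) div p"
    using assms by simp
  finally show ?thesis .
qed

lemma pow_Suc_mult_div_mod:
  fixes g p x m :: nat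
  assumes "0 < g" and "0 < p"
  shows "(g ^ Suc m * x) div p mod g = (g * ((g ^ m * x) mod p)) div p"
proof -
  define z where "z = g ^ m * x"
  have "g ^ Suc m * x = g * (z mod p) + g * (z div p) * p"
    unfolding z_def by (metis mult.assoc add_mult_distrib2 mod_mult_div_eq power_Suc mult.commute)
  then have "(g ^ Suc m * x) div p = (g * (z mod p)) div p + g * (z div p)"
    using assms(2) by simp
  moreover have "(g * (z mod p)) div p < g"
    using assms by (simp add: div_less_iff_less_mult)
  ultimately show ?thesis
    unfolding z_def by simp
qed

lemma run_start_iff_digits:
  fixes p g v b t x :: nat
  assumes "x < p" and "0 < g" and "coprime g v" and "1 \<le> t"
  shows "run_start p g v b t x \<longleftrightarrow>
    (g ^ (t + 1) * x) div p \<in> run_digits p g v b t \<and>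
    [g * x = p * ((g ^ (t + 1) * x) div p div g ^ t) + b] (mod v)"
proof -
  define y where "y j = (g ^ j * x) mod p" for j
  define K where "K = (g ^ (t + 1) * x) div p"
  have p: "0 < p"
    using assms(1) by simp
  have orbit: "y (Suc m) = (g * y m) mod p" for m
    unfolding y_def by (simp add: mod_mult_right_eq mult.assoc)
  have digit: "K div g ^ j mod g = (g * y (t - j)) div p" if "j \<le> t" for j
  proof -
    have "K div g ^ j = (g ^ Suc (t - j) * x) div p"
      unfolding K_def using pow_add_mult_div_div_pow[OF assms(2), of j "Suc (t - j)" x p] that by simp
    then show ?thesis
      unfolding y_def using pow_Suc_mult_div_mod[OF assms(2) p] by simp
  qed
  have top: "K div g ^ t = (g * x) div p"
    unfolding K_def using pow_add_mult_div_div_pow[OF assms(2), of t 1 x p] by simp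
  have "K < g ^ (t + 1)"
    unfolding K_def using assms(1,2) p by (simp add: div_less_iff_less_mult)
  have "run_start p g v b t x \<longleftrightarrow> [g * x = p * ((g * x) div p) + b] (mod v) \<and>
      (\<forall>j\<le>t. keeps_class p g v b ((g * y j) div p) \<longleftrightarrow> 0 < j \<and> j < t)"
    using orbit_run_iff_carries[where y = y and b = b, OF assms(3,4) orbit] assms(1)
    unfolding run_start_def y_def by simp
  also have "(\<forall>j\<le>t. keeps_class p g v b ((g * y j) div p) \<longleftrightarrow> 0 < j \<and> j < t) \<longleftrightarrow>
      (\<forall>j\<le>t. keeps_class p g v b ((g * y (t - j)) div p) \<longleftrightarrow> 0 < t - j \<and> t - j < t)"
    by (metis diff_diff_cancel diff_le_self)
  also have "\<dots> \<longleftrightarrow> (\<forall>j<t + 1. keeps_class p g v b (K div g ^ j mod g) \<longleftrightarrow> 0 < j \<and> j < t)"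
    using digit by (auto simp: less_Suc_eq_le)
  finally show ?thesis
    using \<open>K < g ^ (t + 1)\<close> top unfolding run_digits_def K_def by auto
qed

lemma card_run_start_eq_sum:
  fixes p g v b t :: nat
  assumes "0 < p" and "0 < g" and "coprime g v" and "1 \<le> t"
  shows "card {x. x < p \<and> run_start p g v b t x} =
    (\<Sum>K\<in>run_digits p g v b t. card (run_fibre p g v b t K))"
proof -
  have less_p: "x < p" if "(g ^ (t + 1) * x) div p < g ^ (t + 1)" for x
  proof (rule ccontr)
    assume "\<not> x < p"
    then have "(g ^ (t + 1) * p) div p \<le> (g ^ (t + 1) * x) div p"
      by (intro div_le_mono) simp
    with that assms(1) show False
      by (simp only: nonzero_mult_div_cancel_right)
  qed
  have union: "{x. x < p \<and> run_start p g v b t x} = (\<Union>K\<in>run_digits p g v b t. run_fibre p g v b t K)"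
    using run_start_iff_digits[OF _ assms(2-4)] less_p
    unfolding run_fibre_def run_digits_def by blast
  have finite_fibre: "finite (run_fibre p g v b t K)" if "K \<in> run_digits p g v b t" for K
    using that less_p unfolding run_digits_def run_fibre_def
    by (auto intro: finite_subset[of _ "{..<p}"])
  have "finite (run_digits p g v b t)"
    unfolding run_digits_def by simp
  then show ?thesis
    unfolding union
  proof (rule card_UN_disjoint)
    show "\<forall>K\<in>run_digits p g v b t. finite (run_fibre p g v b t K)"
      using finite_fibre by blast
  qed (auto simp: run_fibre_def)
qed

lemma card_run_digits:
  fixes p g v b t :: nat
  assumes "0 < g" and "1 \<le> t"
  shows "card (run_digits p g v b t) =
    card {d. d < g \<and> keeps_class p g v b d} ^ (t - 1) * card {d. d < g \<and> \<not> keeps_class p g v b d} ^ 2"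
proof -
  let ?f = "\<lambda>j. card {d. d < g \<and> (keeps_class p g v b d \<longleftrightarrow> 0 < j \<and> j < t)}"
  obtain m where t: "t = Suc m"
    using assms(2) by (cases t) auto
  have "card (run_digits p g v b t) = (\<Prod>j<t + 1. ?f j)"
    unfolding run_digits_def by (rule card_digits_restricted[OF assms(1)])
  also have "\<dots> = (\<Prod>j<Suc (Suc m). ?f j)"
    using t by simp
  also have "\<dots> = ?f 0 * (\<Prod>j<m. ?f (Suc j)) * ?f (Suc m)"
    unfolding prod.lessThan_Suc[of _ "Suc m"] prod.lessThan_Suc_shift[of _ m] ..
  also have "(\<Prod>j<m. ?f (Suc j)) = card {d. d < g \<and> keeps_class p g v b d} ^ m"
    using t by simp
  finally show ?thesis
    using t by (simp add: power2_eq_square)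
qed

lemma residue_primroot_bij_betw_atLeastAtMost:
  fixes p g :: nat
  assumes "prime p" and "residue_primroot p g"
  shows "bij_betw (\<lambda>i. g ^ i mod p) {1..p - 1} {1..p - 1}"
proof -
  have p: "1 < p"
    using assms(1) by (rule prime_gt_1_nat)
  have cop: "coprime p g" and ord: "ord p g = p - 1"
    using assms by (simp_all add: residue_primroot_def totient_prime)
  have inj: "inj_on (\<lambda>i. g ^ i mod p) {1..p - 1}"
  proof (rule inj_onI)
    fix i j
    assume ij: "i \<in> {1..p - 1}" "j \<in> {1..p - 1}" and "g ^ i mod p = g ^ j mod p"
    then have "i mod (p - 1) = j mod (p - 1)"
      using order_divides_expdiff[OF cop, of i j] ord by (simp add: cong_def)
    with ij show "i = j"
      by (cases "i = p - 1"; cases "j = p - 1") auto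
  qed
  have "(\<lambda>i. g ^ i mod p) ` {1..p - 1} \<subseteq> {1..p - 1}"
  proof (intro image_subsetI)
    fix i
    have "\<not> p dvd g ^ i"
      using coprime_common_divisor_nat[of p "g ^ i" p] cop p by auto
    then show "g ^ i mod p \<in> {1..p - 1}"
      using p by (auto simp: mod_eq_0_iff_dvd[symmetric] less_Suc_eq_le[symmetric] Suc_leI)
  qed
  with inj show ?thesis
    unfolding bij_betw_def by (simp add: endo_inj_surj)
qed

lemma rho_eq_card_run_start:
  fixes p g v b t :: nat
  assumes "prime p" and "residue_primroot p g" and "1 \<le> t"
  shows "rho p g v b t = card {x. x < p \<and> run_start p g v b t x}"
proof -
  let ?f = "\<lambda>i. g ^ i mod p"
  have bij: "bij_betw ?f {1..p - 1} {1..p - 1}"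
    using assms(1,2) by (rule residue_primroot_bij_betw_atLeastAtMost)
  have "(g ^ j * (g ^ i mod p)) mod p = g ^ (i + j) mod p" for i j
    by (simp add: mod_mult_right_eq power_add mult.commute)
  then have "rho p g v b t = card {i \<in> {1..p - 1}. run_start p g v b t (?f i)}"
    unfolding rho_def run_start_def by (simp only: add.assoc)
  also have "\<dots> = card (?f ` {i \<in> {1..p - 1}. run_start p g v b t (?f i)})"
    by (rule card_image[symmetric], rule inj_on_subset[of _ "{1..p - 1}"])
      (use bij in \<open>auto simp: bij_betw_def\<close>)
  also have "?f ` {i \<in> {1..p - 1}. run_start p g v b t (?f i)} = {x \<in> ?f ` {1..p - 1}. run_start p g v b t x}"
    by (rule Compr_image_eq[symmetric])
  also have "?f ` {1..p - 1} = {1..p - 1}"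
    using bij by (simp add: bij_betw_def)
  also have "{x \<in> {1..p - 1}. run_start p g v b t x} = {x. x < p \<and> run_start p g v b t x}"
  proof -
    have "\<not> run_start p g v b t 0"
      using assms(3) unfolding run_start_def by auto
    then show ?thesis
      using prime_gt_1_nat[OF assms(1)] by (auto simp: Suc_le_eq intro!: gr0I)
  qed
  finally show ?thesis .
qed

lemma card_keeps_class_bounds:
  fixes p g v b :: nat
  assumes "coprime p v" and "0 < v"
  shows "\<lfloor>real g / real v\<rfloor> \<le> int (card {d. d < g \<and> keeps_class p g v b d})"
    and "int (card {d. d < g \<and> keeps_class p g v b d}) \<le> \<lceil>real g / real v\<rceil>"
    and "\<lfloor>real ((v - 1) * g) / real v\<rfloor> \<le> int (card {d. d < g \<and> \<not> keeps_class p g v b d})"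
    and "int (card {d. d < g \<and> \<not> keeps_class p g v b d}) \<le> \<lceil>real ((v - 1) * g) / real v\<rceil>"
proof -
  obtain a where a: "a < v" "\<And>d. [p * d + b = g * b] (mod v) \<longleftrightarrow> d mod v = a"
    using cong_linear_solutions_residue_class[OF assms] by blast
  then have "{d. d < g \<and> keeps_class p g v b d} = {d \<in> {0..<g}. d mod v = a}"
    and "{d. d < g \<and> \<not> keeps_class p g v b d} = {d \<in> {0..<g}. d mod v \<noteq> a}"
    by (auto simp: keeps_class_def)
  then show "\<lfloor>real g / real v\<rfloor> \<le> int (card {d. d < g \<and> keeps_class p g v b d})"
    and "int (card {d. d < g \<and> keeps_class p g v b d}) \<le> \<lceil>real g / real v\<rceil>"
    and "\<lfloor>real ((v - 1) * g) / real v\<rfloor> \<le> int (card {d. d < g \<and> \<not> keeps_class p g v b d})"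
    and "int (card {d. d < g \<and> \<not> keeps_class p g v b d}) \<le> \<lceil>real ((v - 1) * g) / real v\<rceil>"
    using card_residue_class_atLeastLessThan[OF a(1), where lo = 0 and hi = g]
      card_nonresidue_class_atLeastLessThan[OF a(1), where lo = 0 and hi = g]
    by simp_all
qed

lemma card_run_fibre_bounds:
  fixes p g v b t K :: nat
  assumes "0 < p" and "0 < g" and "0 < v" and "coprime g v"
  shows "\<lfloor>real (p div g ^ (t + 1)) / real v\<rfloor> \<le> int (card (run_fibre p g v b t K))"
    and "int (card (run_fibre p g v b t K)) \<le> \<lceil>real (p div g ^ (t + 1) + 1) / real v\<rceil>"
proof -
  let ?q = "p div g ^ (t + 1)"
  obtain a where a: "a < v" "\<And>x. [g * x + 0 = p * (K div g ^ t) + b] (mod v) \<longleftrightarrow> x mod v = a"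
    using cong_linear_solutions_residue_class[OF assms(4,3)] by blast
  obtain lo hi where fibre: "{x. (g ^ (t + 1) * x) div p = K} = {lo..<hi}"
    and len: "?q \<le> hi - lo" "hi - lo \<le> ?q + 1"
    using mult_div_fibre_interval[of "g ^ (t + 1)" p K] assms(1,2) by auto
  have fibre_eq: "run_fibre p g v b t K = {x \<in> {lo..<hi}. x mod v = a}"
    using fibre a(2) unfolding run_fibre_def by auto
  have "\<lfloor>real ?q / real v\<rfloor> \<le> \<lfloor>real (hi - lo) / real v\<rfloor>"
    using len(1) by (intro floor_mono divide_right_mono) simp_all
  moreover have "\<lceil>real (hi - lo) / real v\<rceil> \<le> \<lceil>real (?q + 1) / real v\<rceil>"
    using len(2) by (intro ceiling_mono divide_right_mono) simp_all
  ultimately show "\<lfloor>real ?q / real v\<rfloor> \<le> int (card (run_fibre p g v b t K))"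
    and "int (card (run_fibre p g v b t K)) \<le> \<lceil>real (?q + 1) / real v\<rceil>"
    unfolding fibre_eq using card_residue_class_atLeastLessThan[OF a(1), where lo = lo and hi = hi]
    by linarith+
qed

lemma sum_between_power_products:
  fixes c :: "'a \<Rightarrow> int" and \<alpha> \<beta> n :: nat
  assumes "card V = \<alpha> ^ n * \<beta> ^ 2"
    and "0 \<le> a\<^sub>0" "a\<^sub>0 \<le> int \<alpha>" "int \<alpha> \<le> a\<^sub>1"
    and "0 \<le> b\<^sub>0" "b\<^sub>0 \<le> int \<beta>" "int \<beta> \<le> b\<^sub>1"
    and "0 \<le> c\<^sub>0" "0 \<le> c\<^sub>1" "\<And>K. K \<in> V \<Longrightarrow> c\<^sub>0 \<le> c K \<and> c K \<le> c\<^sub>1"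
  shows "a\<^sub>0 ^ n * b\<^sub>0 ^ 2 * c\<^sub>0 \<le> sum c V \<and> sum c V \<le> a\<^sub>1 ^ n * b\<^sub>1 ^ 2 * c\<^sub>1"
proof
  have card: "int (card V) = int \<alpha> ^ n * int \<beta> ^ 2"
    using assms(1) by simp
  have "a\<^sub>0 ^ n * b\<^sub>0 ^ 2 \<le> int (card V)"
    unfolding card using assms(2-7) by (intro mult_mono power_mono) auto
  then have "a\<^sub>0 ^ n * b\<^sub>0 ^ 2 * c\<^sub>0 \<le> int (card V) * c\<^sub>0"
    using assms(8) by (rule mult_right_mono)
  also have "\<dots> \<le> sum c V"
    using sum_bounded_below[of V c\<^sub>0 c] assms(10) by simp
  finally show "a\<^sub>0 ^ n * b\<^sub>0 ^ 2 * c\<^sub>0 \<le> sum c V" .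
  have "sum c V \<le> int (card V) * c\<^sub>1"
    using sum_bounded_above[of V c c\<^sub>1] assms(10) by simp
  also have "\<dots> \<le> a\<^sub>1 ^ n * b\<^sub>1 ^ 2 * c\<^sub>1"
    unfolding card using assms(2-9)
    by (intro mult_right_mono mult_mono power_mono) auto
  finally show "sum c V \<le> a\<^sub>1 ^ n * b\<^sub>1 ^ 2 * c\<^sub>1" .
qed

theorem theorem10:
  fixes p v g t b q r :: nat
  assumes "prime p" and "odd p"
    and "1 < v" and "v < p - 1"
    and "g \<in> {2..p-1}" and "residue_primroot p g" and "coprime g v"
    and "t \<ge> 1" and "b \<in> {0..v-1}"
    and "p = q * g ^ (t + 1) + r" and "r < g ^ (t + 1)"
  shows "real_of_int (\<lfloor>real g / real v\<rfloor> ^ (t - 1) * \<lfloor>real ((v - 1) * g) / real v\<rfloor> ^ 2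
            * \<lfloor>real q / real v\<rfloor>) \<le> real (rho p g v b t) \<and>
         real (rho p g v b t) \<le> real_of_int (\<lceil>real g / real v\<rceil> ^ (t - 1)
            * \<lceil>real ((v - 1) * g) / real v\<rceil> ^ 2 * \<lceil>real (q + 1) / real v\<rceil>)"
proof -
  have p: "0 < p" and g: "0 < g" and v: "0 < v"
    using assms(3,5) prime_gt_1_nat[OF assms(1)] by auto
  have "coprime p v"
    using assms(1,4) v by (intro prime_imp_coprime) (auto dest: dvd_imp_le)
  note keeps = card_keeps_class_bounds[OF this v, of g b]
  have q: "q = p div g ^ (t + 1)"
    using assms(10,11) by (metis add.commute add_0 div_less div_mult_self1 bot_nat_0.extremum_strict)
  let ?S = "\<Sum>K\<in>run_digits p g v b t. int (card (run_fibre p g v b t K))"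
  have "int (rho p g v b t) = ?S"
    using rho_eq_card_run_start[OF assms(1,6,8)] card_run_start_eq_sum[OF p g assms(7,8)] by simp
  moreover have "\<lfloor>real g / real v\<rfloor> ^ (t - 1) * \<lfloor>real ((v - 1) * g) / real v\<rfloor> ^ 2 * \<lfloor>real q / real v\<rfloor> \<le> ?S \<and>
    ?S \<le> \<lceil>real g / real v\<rceil> ^ (t - 1) * \<lceil>real ((v - 1) * g) / real v\<rceil> ^ 2 * \<lceil>real (q + 1) / real v\<rceil>"
    using card_run_fibre_bounds[OF p g v assms(7), where t = t and b = b] unfolding q
    by (intro sum_between_power_products[OF card_run_digits[OF g assms(8)] _ keeps(1,2) _ keeps(3,4)])
      (simp_all add: pos_less_divide_eq v)
  ultimately show ?thesis
    by (metis of_int_le_iff of_int_of_nat_eq)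
qed

end
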